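(* Let $n\ge 2$ be an integer, $k=3$ and $\alpha=(\tfrac12,\tfrac12,\tfrac1n)$. Let $f(g)$ be the number of $\alpha$-communal triples with entries summing to $g$. Then \[ f(g)=\tfrac12\left(\lfloor g/n\rfloor+1\right)\left(\lfloor g/n\rfloor+\epsilon_g\right),\quad \epsilon_g=\begin{cases}2 & g \text{ even},\\ 0 & g\text{ odd},\end{cases} \] and the generating function $F(x)=\sum_{g\ge0}f(g)x^g$ is \[ F(x)=\frac{1+2x^{n+1}+x^{2n}}{(1-x^2)(1-x^n)(1-x^{2n})}\ \text{ if } n \text{ is odd},\qquad F(x)=\frac{1+x^{n+1}}{(1-x^2)(1-x^n)^2}\ \text{ if } n\text{ is even}. \]
   Context: A triple $[g_1,g_2,g_3]$ of integers is $\alpha$-communal if $0\le g_i\le\alpha_i(g_1+g_2+g_3)$ for $i=1,2,3$. *)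

theory Defs
  imports Complex_Main "HOL-Computational_Algebra.Formal_Power_Series"
begin

definition communal :: "real \<times> real \<times> real \<Rightarrow> int \<times> int \<times> int \<Rightarrow> bool" where
  "communal \<alpha> t \<longleftrightarrow>
     (case \<alpha> of (a1, a2, a3) \<Rightarrow> case t of (g1, g2, g3) \<Rightarrow>
        0 \<le> g1 \<and> real_of_int g1 \<le> a1 * real_of_int (g1 + g2 + g3) \<and>
        0 \<le> g2 \<and> real_of_int g2 \<le> a2 * real_of_int (g1 + g2 + g3) \<and>
        0 \<le> g3 \<and> real_of_int g3 \<le> a3 * real_of_int (g1 + g2 + g3))"

definition communal_count :: "real \<times> real \<times> real \<Rightarrow> int \<Rightarrow> nat" where
  "communal_count \<alpha> g =
     card {t. communal \<alpha> t \<and> (case t of (g1, g2, g3) \<Rightarrow> g1 + g2 + g3 = g)}"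

end

theory Submission imports Defs begin

(* For integers with a + b + c = g the communal conditions
   read 2a <= g, 2b <= g and 0 <= c, c n <= g (nonnegativity of a and b then
   follows from n >= 2).  Writing c = t, the triples with sum g are therefore
   parametrised by t in {0..g div n} and a in {g - t - g div 2 .. g div 2};
   the inner interval has t + [g even] points, and summing over t gives the
   closed form f(g) = (g div n + 1)(g div n + 2[g even]) / 2.

   Multiplying a power series by (1 - X^k) takes the
   k-th difference of its coefficients.  Applying the differences for n, 2n, 2
   (n odd) resp. n, n, 2 (n even) to the closed form leaves exactly the
   coefficients of the claimed numerators, so F(x) is the numerator divided
   by the product of the factors, which is invertible (constant term 1). *)

lemma communal_half_half_iff:
  fixes a b c :: int and n :: nat
  assumes "n > 0"
  shows "communal (1/2, 1/2, 1 / real n) (a, b, c) \<longleftrightarrow>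
           0 \<le> a \<and> 2 * a \<le> a + b + c \<and> 0 \<le> b \<and> 2 * b \<le> a + b + c \<and>
           0 \<le> c \<and> c * int n \<le> a + b + c"
proof -
  have half: "real_of_int x \<le> 1/2 * real_of_int s \<longleftrightarrow> 2 * x \<le> s" for x s :: int
    by linarith
  have "real_of_int x \<le> 1 / real n * real_of_int s \<longleftrightarrow> real_of_int (x * int n) \<le> real_of_int s"
    for x s :: int using assms by (simp add: field_simps)
  then have frac: "real_of_int x \<le> 1 / real n * real_of_int s \<longleftrightarrow> x * int n \<le> s" for x s :: int
    by (simp only: of_int_le_iff)
  show ?thesis unfolding communal_def prod.case half frac ..
qed

lemma communal_triples_param:
  fixes n g :: nat
  assumes n: "n \<ge> 2"
  shows "{t. communal (1/2, 1/2, 1 / real n) t \<and> (case t of (g1, g2, g3) \<Rightarrow> g1 + g2 + g3 = int g)}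
       = (\<lambda>(t, a). (a, int g - int t - a, int t)) `
           (SIGMA t:{0..g div n}. {int g - int t - int (g div 2) .. int (g div 2)})"
    (is "?L = ?R")
proof -
  have last_bound: "c * int n \<le> int g \<longleftrightarrow> nat c \<le> g div n" if "0 \<le> c" for c :: int
  proof -
    obtain k where "c = int k" using \<open>0 \<le> c\<close> nonneg_eq_int by blast
    moreover have "k * n \<le> g \<longleftrightarrow> k \<le> g div n"
      using n by (simp add: less_eq_div_iff_mult_less_eq)
    ultimately show ?thesis by (metis nat_int of_nat_le_iff of_nat_mult)
  qed
  have half_bound: "2 * x \<le> int g \<longleftrightarrow> x \<le> int (g div 2)" for x :: int
    by linarith
  show ?thesis
  proof (intro set_eqI iffI)
    fix x assume "x \<in> ?L"
    then obtain a b c where x: "x = (a, b, c)" and sum: "a + b + c = int g"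
      and com: "communal (1/2, 1/2, 1 / real n) (a, b, c)"
      by (cases x) auto
    have "0 \<le> c" "c * int n \<le> int g" "2 * a \<le> int g" "2 * b \<le> int g"
      using com n sum by (simp_all add: communal_half_half_iff)
    then have "0 \<le> c" "nat c \<le> g div n" "a \<le> int (g div 2)" "int g - int (nat c) - int (g div 2) \<le> a"
      using last_bound half_bound[of a] half_bound[of b] sum by auto
    then show "x \<in> ?R"
      using x sum by (auto intro!: image_eqI[where x="(nat c, a)"])
  next
    fix x assume "x \<in> ?R"
    then obtain t a where x: "x = (a, int g - int t - a, int t)" and t: "t \<le> g div n"
      and a: "int g - int t - int (g div 2) \<le> a" "a \<le> int (g div 2)" by auto
    have tn: "int t * int n \<le> int g" using last_bound[of "int t"] t by simp
    moreover have "int t * 2 \<le> int t * int n" using n by (intro mult_left_mono) auto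
    ultimately have "2 * int t \<le> int g" by linarith
    then have "0 \<le> a" "2 * a \<le> int g" "0 \<le> int g - int t - a" "2 * (int g - int t - a) \<le> int g"
      using a half_bound[of a] half_bound[of "int g - int t - a"] by linarith+
    then show "x \<in> ?L"
      using tn n by (simp add: x communal_half_half_iff)
  qed
qed

lemma communal_count_as_sum:
  fixes n g :: nat
  assumes n: "n \<ge> 2"
  shows "communal_count (1/2, 1/2, 1 / real n) (int g) =
           (\<Sum>t\<in>{0..g div n}. t + (if even g then 1 else 0))"
proof -
  let ?A = "SIGMA t:{0..g div n}. {int g - int t - int (g div 2) .. int (g div 2)}"
  have "inj_on (\<lambda>(t, a). (a, int g - int t - a, int t)) ?A"
    by (auto simp: inj_on_def)
  then have "communal_count (1/2, 1/2, 1 / real n) (int g) = card ?A"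
    unfolding communal_count_def communal_triples_param[OF n] by (rule card_image)
  also have "\<dots> = (\<Sum>t\<in>{0..g div n}. card {int g - int t - int (g div 2) .. int (g div 2)})"
    by (rule card_SigmaI) auto
  also have "\<dots> = (\<Sum>t\<in>{0..g div n}. t + (if even g then 1 else 0))"
  proof (rule sum.cong[OF refl])
    fix t
    have "int (g div 2) - (int g - int t - int (g div 2)) + 1 = int (t + (if even g then 1 else 0))"
      by (cases "even g") (auto elim!: evenE oddE)
    then show "card {int g - int t - int (g div 2) .. int (g div 2)} = t + (if even g then 1 else 0)"
      by (simp only: card_atLeastAtMost_int nat_int)
  qed
  finally show ?thesis .
qed

lemma sum_shifted_range:
  "real (\<Sum>t\<in>{0..M::nat}. t + c) = 1/2 * (real M + 1) * (real M + 2 * real c)"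
  by (induction M) (auto simp: field_simps)

definition communal_formula :: "nat \<Rightarrow> nat \<Rightarrow> real" where
  "communal_formula n g = 1/2 * (real (g div n) + 1) * (real (g div n) + (if even g then 2 else 0))"

lemma communal_count_formula:
  fixes n g :: nat
  assumes "n \<ge> 2"
  shows "real (communal_count (1/2, 1/2, 1 / real n) (int g)) = communal_formula n g"
  unfolding communal_count_as_sum[OF assms] sum_shifted_range communal_formula_def by simp

lemma one_minus_X_power_times_Abs_fps:
  fixes a :: "nat \<Rightarrow> 'a::comm_ring_1"
  shows "(1 - fps_X ^ k) * Abs_fps a = Abs_fps (\<lambda>g. a g - (if k \<le> g then a (g - k) else 0))"
  by (simp add: fps_eq_iff left_diff_distrib fps_X_power_mult_nth not_le)

lemma fps_eq_divide_if_times_eq: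
  fixes A D N :: "'a::field fps"
  assumes "A * D = N" "fps_nth D 0 \<noteq> 0"
  shows "A = N / D"
proof -
  have "D \<noteq> 0" using assms(2) by auto
  then show ?thesis using assms(1) by (metis nonzero_mult_div_cancel_right)
qed

lemma formula_diff_n_odd:
  fixes n :: nat assumes n: "n \<ge> 2" "odd n"
  shows "communal_formula n g - (if n \<le> g then communal_formula n (g - n) else 0)
           = (if even g then 2 * real (g div n) + 1 else 0)"
proof (cases "n \<le> g")
  case True
  have d: "g div n = Suc ((g - n) div n)" using le_div_geq[OF _ True] n by simp
  have "even (g - n) \<longleftrightarrow> odd g" using n True by auto
  then show ?thesis using True unfolding communal_formula_def d
    by (cases "even g") (simp_all add: field_simps)
qed (simp add: communal_formula_def)

lemma formula_diff_2n_odd: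
  fixes n :: nat assumes n: "n \<ge> 2" "odd n"
  defines "h \<equiv> \<lambda>g::nat. if even g then 2 * real (g div n) + 1 else 0"
  shows "h g - (if 2 * n \<le> g then h (g - 2 * n) else 0) =
           (if even g then (if g < n then 1 else if g < 2 * n then 3 else 4) else 0)"
proof (cases "2 * n \<le> g")
  case True
  have "g div n = Suc (Suc ((g - 2 * n) div n))"
    using le_div_geq[of n g] le_div_geq[of n "g - n"] n True by (simp add: diff_diff_add mult_2)
  moreover have "even (g - 2 * n) \<longleftrightarrow> even g" using True by auto
  ultimately show ?thesis using True n unfolding h_def by (cases "even g") simp_all
next
  case False
  moreover have "\<not> g < n \<Longrightarrow> g div n = 1"
    using False le_div_geq[of n g] n by (simp add: div_less)
  ultimately show ?thesis unfolding h_def by auto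
qed

lemma formula_diff_2_odd:
  fixes n :: nat assumes n: "n \<ge> 2" "odd n"
  defines "h \<equiv> \<lambda>g::nat. if even g then (if g < n then 1 else if g < 2 * n then 3 else 4) else (0::real)"
  shows "h g - (if 2 \<le> g then h (g - 2) else 0) =
           (if g = 0 then 1 else 0) + 2 * (if g = n + 1 then 1 else 0) + (if g = 2 * n then 1 else 0)"
proof -
  consider "g = 0" | "g = 1" | "g \<ge> 2" by linarith
  then show ?thesis
  proof cases
    case 3
    have "n \<ge> 3" using n by presburger
    moreover have "even (g - 2) \<longleftrightarrow> even g" using 3 by auto
    ultimately show ?thesis unfolding h_def using 3 n
      by (cases "even g") (auto, presburger+)
  qed (use n in \<open>auto simp: h_def\<close>)
qed

lemma formula_diff_n_even:
  fixes n :: nat assumes n: "n \<ge> 2" "even n"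
  shows "communal_formula n g - (if n \<le> g then communal_formula n (g - n) else 0)
           = (if even g then real (g div n) + 1 else real (g div n))"
proof (cases "n \<le> g")
  case True
  have d: "g div n = Suc ((g - n) div n)" using le_div_geq[OF _ True] n by simp
  have "even (g - n) \<longleftrightarrow> even g" using n True by auto
  then show ?thesis using True unfolding communal_formula_def d
    by (cases "even g") (simp_all add: field_simps)
qed (simp add: communal_formula_def)

lemma formula_diff_n_n_even:
  fixes n :: nat assumes n: "n \<ge> 2" "even n"
  defines "h \<equiv> \<lambda>g::nat. if even g then real (g div n) + 1 else real (g div n)"
  shows "h g - (if n \<le> g then h (g - n) else 0) = (if even g \<or> n \<le> g then 1 else 0)"
proof (cases "n \<le> g")
  case True
  have d: "g div n = Suc ((g - n) div n)" using le_div_geq[OF _ True] n by simp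
  have "even (g - n) \<longleftrightarrow> even g" using n True by auto
  then show ?thesis using True unfolding h_def d by (cases "even g") simp_all
qed (simp add: h_def)

lemma formula_diff_2_even:
  fixes n :: nat assumes n: "n \<ge> 2" "even n"
  defines "h \<equiv> \<lambda>g::nat. if even g \<or> n \<le> g then 1 else (0::real)"
  shows "h g - (if 2 \<le> g then h (g - 2) else 0) = (if g = 0 then 1 else 0) + (if g = n + 1 then 1 else 0)"
proof -
  consider "g = 0" | "g = 1" | "g \<ge> 2" by linarith
  then show ?thesis
  proof cases
    case 3
    have "even (g - 2) \<longleftrightarrow> even g" using 3 by auto
    then show ?thesis unfolding h_def using 3 n
      by (cases "even g") (auto, presburger+)
  qed (use n in \<open>auto simp: h_def\<close>)
qed

lemma communal_formula_fps_odd: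
  fixes n :: nat assumes n: "n \<ge> 2" "odd n"
  shows "Abs_fps (communal_formula n) =
           (1 + 2 * fps_X ^ (n + 1) + fps_X ^ (2 * n)) /
           ((1 - fps_X ^ 2) * (1 - fps_X ^ n) * (1 - fps_X ^ (2 * n)))"
proof (rule fps_eq_divide_if_times_eq)
  have "Abs_fps (communal_formula n) * ((1 - fps_X ^ 2) * (1 - fps_X ^ n) * (1 - fps_X ^ (2 * n)))
      = (1 - fps_X ^ 2) * ((1 - fps_X ^ (2 * n)) * ((1 - fps_X ^ n) * Abs_fps (communal_formula n)))"
    by (simp only: ac_simps)
  also have "(1 - fps_X ^ n) * Abs_fps (communal_formula n)
      = Abs_fps (\<lambda>g. if even g then 2 * real (g div n) + 1 else 0)"
    unfolding one_minus_X_power_times_Abs_fps using formula_diff_n_odd[OF n] by simp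
  also have "(1 - fps_X ^ (2 * n)) * \<dots>
      = Abs_fps (\<lambda>g. if even g then (if g < n then 1 else if g < 2 * n then 3 else 4) else 0)"
    unfolding one_minus_X_power_times_Abs_fps using formula_diff_2n_odd[OF n] by simp
  also have "(1 - fps_X ^ 2) * \<dots> = Abs_fps (\<lambda>g. (if g = 0 then 1 else 0)
      + 2 * (if g = n + 1 then 1 else 0) + (if g = 2 * n then 1 else 0))"
    unfolding one_minus_X_power_times_Abs_fps using formula_diff_2_odd[OF n] by simp
  also have "\<dots> = 1 + 2 * fps_X ^ (n + 1) + fps_X ^ (2 * n)"
    by (simp only: fps_eq_iff mult_2 fps_add_nth fps_nth_Abs_fps fps_X_power_nth fps_one_nth) auto
  finally show "Abs_fps (communal_formula n) * ((1 - fps_X ^ 2) * (1 - fps_X ^ n) * (1 - fps_X ^ (2 * n)))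
      = 1 + 2 * fps_X ^ (n + 1) + fps_X ^ (2 * n)" .
  show "fps_nth ((1 - fps_X ^ 2) * (1 - fps_X ^ n) * (1 - fps_X ^ (2 * n)) :: real fps) 0 \<noteq> 0"
    using n by simp
qed

lemma communal_formula_fps_even:
  fixes n :: nat assumes n: "n \<ge> 2" "even n"
  shows "Abs_fps (communal_formula n) = (1 + fps_X ^ (n + 1)) / ((1 - fps_X ^ 2) * (1 - fps_X ^ n) ^ 2)"
proof (rule fps_eq_divide_if_times_eq)
  have "Abs_fps (communal_formula n) * ((1 - fps_X ^ 2) * (1 - fps_X ^ n) ^ 2)
      = (1 - fps_X ^ 2) * ((1 - fps_X ^ n) * ((1 - fps_X ^ n) * Abs_fps (communal_formula n)))"
    by (simp only: ac_simps power2_eq_square)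
  also have "(1 - fps_X ^ n) * Abs_fps (communal_formula n)
      = Abs_fps (\<lambda>g. if even g then real (g div n) + 1 else real (g div n))"
    unfolding one_minus_X_power_times_Abs_fps using formula_diff_n_even[OF n] by simp
  also have "(1 - fps_X ^ n) * \<dots> = Abs_fps (\<lambda>g. if even g \<or> n \<le> g then 1 else 0)"
    unfolding one_minus_X_power_times_Abs_fps using formula_diff_n_n_even[OF n] by simp
  also have "(1 - fps_X ^ 2) * \<dots> = Abs_fps (\<lambda>g. (if g = 0 then 1 else 0) + (if g = n + 1 then 1 else 0))"
    unfolding one_minus_X_power_times_Abs_fps using formula_diff_2_even[OF n] by simp
  also have "\<dots> = 1 + fps_X ^ (n + 1)"
    by (simp only: fps_eq_iff fps_add_nth fps_nth_Abs_fps fps_X_power_nth fps_one_nth) auto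
  finally show "Abs_fps (communal_formula n) * ((1 - fps_X ^ 2) * (1 - fps_X ^ n) ^ 2) = 1 + fps_X ^ (n + 1)" .
  show "fps_nth ((1 - fps_X ^ 2) * (1 - fps_X ^ n) ^ 2 :: real fps) 0 \<noteq> 0"
    using n by simp
qed

theorem mainTheorem11:
  fixes n :: nat
  assumes "n \<ge> 2"
  defines "f \<equiv> (\<lambda>g::nat. communal_count (1/2, 1/2, 1 / real n) (int g))"
  shows "(\<forall>g::nat. real (f g) =
            1/2 * (real (g div n) + 1) * (real (g div n) + (if even g then 2 else 0)))
       \<and> (odd n \<longrightarrow> Abs_fps (\<lambda>g. real (f g)) =
            (1 + 2 * fps_X ^ (n + 1) + fps_X ^ (2 * n)) /
            ((1 - fps_X ^ 2) * (1 - fps_X ^ n) * (1 - fps_X ^ (2 * n))))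
       \<and> (even n \<longrightarrow> Abs_fps (\<lambda>g. real (f g)) =
            (1 + fps_X ^ (n + 1)) / ((1 - fps_X ^ 2) * (1 - fps_X ^ n) ^ 2))"
proof -
  have f_closed: "real (f g) = communal_formula n g" for g
    using communal_count_formula[OF assms(1)] unfolding f_def .
  then have f_fun: "(\<lambda>g. real (f g)) = communal_formula n"
    by blast
  have "\<forall>g. real (f g) = 1/2 * (real (g div n) + 1) * (real (g div n) + (if even g then 2 else 0))"
    using f_closed by (simp add: communal_formula_def)
  then show ?thesis
    unfolding f_fun
    using communal_formula_fps_odd[OF assms(1)] communal_formula_fps_even[OF assms(1)]
    by blast
qed

end
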